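(* Let $a_n = \left(\frac23\right)^n p_n\!\left(\frac14\right)$ for $n\ge0$. Then $a_0=1$ and for all $n\ge 0$, \[ 3a_{n+1} = 2a_n + \sum_{k=0}^n\binom{n+1}{k}a_k + 3. \]
   Context: Define polynomial sequences $(p_k(x))_{k\ge -1}$ and $(q_k(x))_{k\ge -1}$ by $p_{-1}(x)=0$, $q_{-1}(x)=1$ and, for $k\ge -1$, $p_{k+1}(x) = 2(kx+1)p_k(x) + 2x(1-x)p_k'(x) + q_k(x)$, $q_{k+1}(x) = (2(k+1)x+1)q_k(x) + 2x(1-x)q_k'(x)$. *)

theory Defs
  imports "HOL-Computational_Algebra.Polynomial"
begin

text \<open>pq m = (p_{m-1}, q_{m-1}); the index shift handles the starting index -1.
  For m = Suc j the recursion step uses k = j - 1 (an integer, possibly -1).\<close>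
fun pq :: "nat \<Rightarrow> real poly \<times> real poly" where
  "pq 0 = (0, 1)"
| "pq (Suc j) =
     (let (pk, qk) = pq j; k = real_of_int (int j - 1) in
      (smult 2 [:1, k:] * pk + smult 2 [:0, 1, -1:] * pderiv pk + qk,
       [:1, 2 * (k + 1):] * qk + smult 2 [:0, 1, -1:] * pderiv qk))"

definition p :: "int \<Rightarrow> real poly" where
  "p k = fst (pq (nat (k + 1)))"

definition q :: "int \<Rightarrow> real poly" where
  "q k = snd (pq (nat (k + 1)))"

definition a_seq :: "nat \<Rightarrow> real" where
  "a_seq n = (2/3) ^ n * poly (p (int n)) (1/4)"

end

theory Submission
  imports Defs
begin

text \<open>
  Let u = 2 - 2x (\<open>u_poly\<close>) and D_{d,w} f = 2x(1 - x) f' + (d + 2wx) f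
  (\<open>weighted_deriv d w\<close>), so that p_{n+1} = D_{2,n} p_n + q_n and q_{n+1} = D_{1,n+1} q_n. Since 2x(1 - x) u' = -2xu, we have
  D_{d,w} (u f) = u D_{d,w-1} f and D_{d,w} (x f) = x (u f + D_{d,w} f). Applying the appropriate D
  to the polynomial identities
    2 q_{n+1} = u q_n + 2x \<Sum>_{k \<le> n+1} (n+1 choose k) u^{n+1-k} q_k,
    2 p_{n+1} = u p_n + 2x \<Sum>_{k \<le> n+1} (n+1 choose k) u^{n+1-k} p_k + u^{n+2}
  therefore yields them for n + 1, so both hold by induction. At x = 1/4 we have u = 3/2, and the
  normalisation (2/3)^n turns the identity for p into the recurrence.
\<close>

definition binomial_transform :: "'a::comm_semiring_1 \<Rightarrow> (nat \<Rightarrow> 'a) \<Rightarrow> nat \<Rightarrow> 'a" where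
  "binomial_transform c f m = (\<Sum>k\<le>m. of_nat (m choose k) * c ^ (m - k) * f k)"

lemma binomial_transform_cong:
  "(\<And>k. k \<le> m \<Longrightarrow> f k = g k) \<Longrightarrow> binomial_transform c f m = binomial_transform c g m"
  unfolding binomial_transform_def by (rule sum.cong) simp_all

lemma binomial_transform_diff:
  "binomial_transform (c :: 'a::comm_ring_1) (\<lambda>k. f k - g k) m
     = binomial_transform c f m - binomial_transform c g m"
  by (simp add: binomial_transform_def sum_subtractf algebra_simps)

lemma binomial_transform_Suc:
  "binomial_transform c f (Suc m) = c * binomial_transform c f m + binomial_transform c (\<lambda>k. f (Suc k)) m"
proof -
  let ?T = "\<Sum>k\<le>Suc m. of_nat (m choose k) * c ^ (Suc m - k) * f k"
  have "?T = (\<Sum>k\<le>m. c * (of_nat (m choose k) * c ^ (m - k) * f k))"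
    by (simp add: sum.atMost_Suc binomial_eq_0, rule sum.cong) (auto simp: Suc_diff_le mult_ac)
  then have T_down: "?T = c * binomial_transform c f m"
    by (simp add: binomial_transform_def sum_distrib_left)
  have T_up: "?T = c ^ Suc m * f 0 + (\<Sum>k\<le>m. of_nat (m choose Suc k) * c ^ (m - k) * f (Suc k))"
    by (subst sum.atMost_Suc_shift) simp
  have "binomial_transform c f (Suc m) = c ^ Suc m * f 0
      + (\<Sum>k\<le>m. of_nat (m choose Suc k) * c ^ (m - k) * f (Suc k))
      + (\<Sum>k\<le>m. of_nat (m choose k) * c ^ (m - k) * f (Suc k))"
    \<comment> \<open>Pascal's rule splits each coefficient \<open>Suc m choose Suc k\<close>\<close>
    unfolding binomial_transform_def
    by (subst sum.atMost_Suc_shift) (simp add: sum.distrib algebra_simps)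
  also have "c ^ Suc m * f 0 + (\<Sum>k\<le>m. of_nat (m choose Suc k) * c ^ (m - k) * f (Suc k))
      = c * binomial_transform c f m"
    using T_down T_up by simp
  finally show ?thesis
    by (simp add: binomial_transform_def)
qed

lemma poly_binomial_transform:
  "poly (binomial_transform c f m) x = binomial_transform (poly c x) (\<lambda>k. poly (f k) x) m"
  by (simp add: binomial_transform_def poly_sum)

lemma binomial_transform_scaled:
  "binomial_transform c (\<lambda>k. c ^ k * g k) m = c ^ m * (\<Sum>k\<le>m. of_nat (m choose k) * g k)"
  unfolding binomial_transform_def sum_distrib_left
proof (rule sum.cong)
  fix k assume "k \<in> {..m}"
  then have "c ^ (m - k) * c ^ k = c ^ m"
    by (simp add: power_add[symmetric])
  then show "of_nat (m choose k) * c ^ (m - k) * (c ^ k * g k) = c ^ m * (of_nat (m choose k) * g k)"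
    by (metis mult.assoc mult.left_commute)
qed simp

definition u_poly :: "'a::comm_ring_1 poly" where
  "u_poly = [:2, -2:]"

definition weighted_deriv :: "'a::idom \<Rightarrow> 'a \<Rightarrow> 'a poly \<Rightarrow> 'a poly" where
  "weighted_deriv d w f = [:0, 2, -2:] * pderiv f + [:d, 2 * w:] * f"

lemma weighted_deriv_add: "weighted_deriv d w (f + g) = weighted_deriv d w f + weighted_deriv d w g"
  by (simp add: weighted_deriv_def pderiv_add distrib_left del: mult_pCons_left)

lemma weighted_deriv_of_nat_mult: "weighted_deriv d w (of_nat c * f) = of_nat c * weighted_deriv d w f"
  by (simp add: weighted_deriv_def of_nat_poly pderiv_smult algebra_simps del: mult_pCons_left)

lemma weighted_deriv_numeral_mult: "weighted_deriv d w (numeral c * f) = numeral c * weighted_deriv d w f"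
  using weighted_deriv_of_nat_mult[of d w "numeral c" f] by simp

lemma weighted_deriv_0 [simp]: "weighted_deriv d w 0 = 0"
  by (simp add: weighted_deriv_def)

lemma weighted_deriv_sum: "weighted_deriv d w (\<Sum>k\<in>A. f k) = (\<Sum>k\<in>A. weighted_deriv d w (f k))"
  by (induction A rule: infinite_finite_induct) (auto simp: weighted_deriv_add)

lemma weighted_deriv_mult_x:
  "weighted_deriv d w ([:0, 1:] * f) = [:0, 1:] * (u_poly * f + weighted_deriv d w f)"
proof -
  have "[:0, 2, -2:] * pderiv [:0, 1:] = [:0, 1:] * (u_poly :: 'a poly)"
    by (simp add: u_poly_def pderiv_pCons)
  then show ?thesis
    by (simp add: weighted_deriv_def pderiv_mult algebra_simps del: mult_pCons_left mult_pCons_right)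
qed

lemma weighted_deriv_mult_u:
  "weighted_deriv d w (u_poly * f) = u_poly * weighted_deriv d (w - 1) f"
proof -
  \<comment> \<open>Naming the constant polynomials keeps the simplifier from expanding their products.\<close>
  define A :: "'a poly" where "A = [:0, 2, -2:]"
  define x :: "'a poly" where "x = [:0, 1:]"
  have "A * pderiv u_poly = - smult 2 x * u_poly"
    by (simp add: A_def u_poly_def x_def pderiv_pCons)
  then have deriv_u: "A * (f * pderiv u_poly) = - smult 2 x * u_poly * f"
    by (metis mult.assoc mult.commute)
  have shift_w: "[:d, 2 * w:] = [:d, 2 * (w - 1):] + smult 2 x"
    by (simp add: x_def)
  show ?thesis
    unfolding weighted_deriv_def unfolding A_def[symmetric] shift_w
    by (simp add: pderiv_mult algebra_simps deriv_u del: mult_pCons_left mult_pCons_right)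
qed

lemma weighted_deriv_mult_u_power:
  "weighted_deriv d w (u_poly ^ j * f) = u_poly ^ j * weighted_deriv d (w - of_nat j) f"
proof (induction j arbitrary: w)
  case (Suc j)
  have "weighted_deriv d w (u_poly ^ Suc j * f) = u_poly * weighted_deriv d (w - 1) (u_poly ^ j * f)"
    by (simp add: mult.assoc weighted_deriv_mult_u)
  also have "\<dots> = u_poly ^ Suc j * weighted_deriv d (w - of_nat (Suc j)) f"
    by (simp add: Suc.IH mult.assoc diff_diff_eq)
  finally show ?case .
qed simp

lemma weighted_deriv_binomial_transform:
  "weighted_deriv d w (binomial_transform u_poly f m)
     = binomial_transform u_poly (\<lambda>k. weighted_deriv d (w - of_nat (m - k)) (f k)) m"
  unfolding binomial_transform_def weighted_deriv_sum
  by (rule sum.cong) (simp_all add: mult.assoc weighted_deriv_of_nat_mult weighted_deriv_mult_u_power)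

definition p_seq :: "nat \<Rightarrow> real poly" where "p_seq n = p (int n)"
definition q_seq :: "nat \<Rightarrow> real poly" where "q_seq n = q (int n)"

lemma pq_Suc_eq: "pq (Suc n) = (p_seq n, q_seq n)"
proof -
  have "nat (int n + 1) = Suc n" by simp
  then show ?thesis by (simp add: p_seq_def q_seq_def p_def q_def)
qed

lemma p_seq_0: "p_seq 0 = 1"
  using pq_Suc_eq[of 0] by simp

lemma q_seq_0: "q_seq 0 = 1"
  using pq_Suc_eq[of 0] by simp

lemma pq_seq_Suc:
  "p_seq (Suc n) = weighted_deriv 2 (real n) (p_seq n) + q_seq n"
  "q_seq (Suc n) = weighted_deriv 1 (real (Suc n)) (q_seq n)"
proof -
  have "pq (Suc (Suc n)) = (weighted_deriv 2 (real n) (p_seq n) + q_seq n,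
      weighted_deriv 1 (real (Suc n)) (q_seq n))"
    unfolding pq.simps(2)[of "Suc n"] pq_Suc_eq[of n]
    by (simp add: weighted_deriv_def Let_def ac_simps del: mult_pCons_left mult_pCons_right)
  then show "p_seq (Suc n) = weighted_deriv 2 (real n) (p_seq n) + q_seq n"
    "q_seq (Suc n) = weighted_deriv 1 (real (Suc n)) (q_seq n)"
    unfolding pq_Suc_eq by simp_all
qed

lemma q_seq_binomial_identity:
  "2 * q_seq (Suc n) = u_poly * q_seq n + 2 * ([:0, 1:] * binomial_transform u_poly q_seq (Suc n))"
proof (induction n)
  case 0
  show ?case
    by (simp add: pq_seq_Suc q_seq_0 binomial_transform_def weighted_deriv_def u_poly_def numeral_poly)
next
  case (Suc n)
  let ?D = "weighted_deriv 1 (real (Suc (Suc n)))"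
  have "?D (2 * q_seq (Suc n)) = 2 * q_seq (Suc (Suc n))"
    using pq_seq_Suc(2)[of "Suc n"] by (simp add: weighted_deriv_numeral_mult)
  moreover have "?D (u_poly * q_seq n) = u_poly * q_seq (Suc n)"
    by (simp add: weighted_deriv_mult_u pq_seq_Suc)
  moreover have "?D (binomial_transform u_poly q_seq (Suc n))
      = binomial_transform u_poly (\<lambda>k. q_seq (Suc k)) (Suc n)"
    unfolding weighted_deriv_binomial_transform
    by (rule binomial_transform_cong) (simp add: pq_seq_Suc of_nat_diff)
  then have "?D ([:0, 1:] * binomial_transform u_poly q_seq (Suc n))
      = [:0, 1:] * binomial_transform u_poly q_seq (Suc (Suc n))"
    by (simp only: weighted_deriv_mult_x binomial_transform_Suc[of u_poly q_seq "Suc n"])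
  moreover have "?D (2 * q_seq (Suc n)) = ?D (u_poly * q_seq n + 2 * ([:0, 1:] * binomial_transform u_poly q_seq (Suc n)))"
    using Suc.IH by (simp only:)
  ultimately show ?case
    by (simp only: weighted_deriv_add weighted_deriv_numeral_mult)
qed

lemma p_seq_binomial_identity:
  "2 * p_seq (Suc n) = u_poly * p_seq n + 2 * ([:0, 1:] * binomial_transform u_poly p_seq (Suc n))
     + u_poly ^ (n + 2)"
proof (induction n)
  case 0
  show ?case
    by (simp add: pq_seq_Suc p_seq_0 q_seq_0 binomial_transform_def weighted_deriv_def u_poly_def
        numeral_poly one_pCons power2_eq_square)
next
  case (Suc n)
  let ?D = "weighted_deriv 2 (real (Suc n))"
  let ?x = "[:0, 1:] :: real poly"
  have D_p: "?D (p_seq (Suc n)) = p_seq (Suc (Suc n)) - q_seq (Suc n)"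
    using pq_seq_Suc(1)[of "Suc n"] by simp
  have D_up: "?D (u_poly * p_seq n) = u_poly * (p_seq (Suc n) - q_seq n)"
    by (simp add: weighted_deriv_mult_u pq_seq_Suc)
  have "?D (binomial_transform u_poly p_seq (Suc n))
      = binomial_transform u_poly (\<lambda>k. p_seq (Suc k) - q_seq k) (Suc n)"
    unfolding weighted_deriv_binomial_transform
    by (rule binomial_transform_cong) (simp add: pq_seq_Suc of_nat_diff)
  then have D_xbt: "?D (?x * binomial_transform u_poly p_seq (Suc n))
      = ?x * (binomial_transform u_poly p_seq (Suc (Suc n)) - binomial_transform u_poly q_seq (Suc n))"
    by (simp only: weighted_deriv_mult_x binomial_transform_diff binomial_transform_Suc[of u_poly p_seq "Suc n"]
        add_diff_eq)
  have "weighted_deriv 2 (real (Suc n) - of_nat (n + 2)) 1 = (u_poly :: real poly)"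
    by (simp add: weighted_deriv_def u_poly_def)
  then have D_upow: "?D (u_poly ^ (n + 2)) = u_poly ^ (Suc n + 2)"
    using weighted_deriv_mult_u_power[of 2 "real (Suc n)" "n + 2" 1]
    by (simp add: numeral_3_eq_3 numeral_2_eq_2 del: mult_pCons_left mult_pCons_right)
  have "?D (2 * p_seq (Suc n))
      = ?D (u_poly * p_seq n + 2 * (?x * binomial_transform u_poly p_seq (Suc n)) + u_poly ^ (n + 2))"
    using Suc.IH by (simp only:)
  then have "2 * (p_seq (Suc (Suc n)) - q_seq (Suc n)) = u_poly * (p_seq (Suc n) - q_seq n)
      + 2 * (?x * (binomial_transform u_poly p_seq (Suc (Suc n)) - binomial_transform u_poly q_seq (Suc n)))
      + u_poly ^ (Suc n + 2)"
    by (simp only: weighted_deriv_add weighted_deriv_numeral_mult D_p D_up D_xbt D_upow)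
  with q_seq_binomial_identity[of n] show ?case
    by (simp add: algebra_simps del: mult_pCons_left mult_pCons_right)
qed

lemma poly_p_seq_quarter: "poly (p_seq k) (1/4) = (3/2) ^ k * a_seq k"
proof -
  have "(3/2 :: real) ^ k * (2/3) ^ k = 1"
    by (simp flip: power_mult_distrib)
  then show ?thesis
    by (simp add: a_seq_def p_seq_def mult.assoc[symmetric])
qed

lemma a_seq_recurrence:
  "3 * a_seq (n + 1) = 2 * a_seq n + (\<Sum>k = 0..n. real ((n + 1) choose k) * a_seq k) + 3"
proof -
  define c :: real where "c = 3/2"
  define S where "S = (\<Sum>k = 0..n. real ((n + 1) choose k) * a_seq k)"
  have u: "poly u_poly (1/4) = c"
    by (simp add: u_poly_def c_def)
  have p: "poly (p_seq k) (1/4) = c ^ k * a_seq k" for k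
    by (simp add: poly_p_seq_quarter c_def)
  have "poly (binomial_transform u_poly p_seq (Suc n)) (1/4)
      = c ^ Suc n * (\<Sum>k\<le>Suc n. real (Suc n choose k) * a_seq k)"
    by (simp only: poly_binomial_transform u p binomial_transform_scaled)
  also have "(\<Sum>k\<le>Suc n. real (Suc n choose k) * a_seq k) = S + a_seq (Suc n)"
    by (simp add: S_def sum.atMost_Suc atLeast0AtMost)
  finally have bt: "poly (binomial_transform u_poly p_seq (Suc n)) (1/4) = c ^ Suc n * (S + a_seq (Suc n))" .
  have "poly (2 * p_seq (Suc n)) (1/4) = poly (u_poly * p_seq n
      + 2 * ([:0, 1:] * binomial_transform u_poly p_seq (Suc n)) + u_poly ^ (n + 2)) (1/4)"
    by (simp only: p_seq_binomial_identity)
  then have "2 * (c ^ Suc n * a_seq (Suc n)) = c * (c ^ n * a_seq n)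
      + 2 * (1/4 * (c ^ Suc n * (S + a_seq (Suc n)))) + c ^ (n + 2)"
    by (simp add: u p bt)
  moreover have "c * (c ^ n * a_seq n) = c ^ Suc n * a_seq n" "c ^ (n + 2) = c ^ Suc n * (3/2)"
    by (simp_all add: c_def)
  ultimately have "c ^ Suc n * (3 * a_seq (Suc n)) = c ^ Suc n * (2 * a_seq n + S + 3)"
    by (simp only:) (simp add: algebra_simps)
  then show ?thesis
    by (simp add: S_def c_def)
qed

theorem proposition3p4:
  shows "a_seq 0 = 1 \<and>
    (\<forall>n::nat. 3 * a_seq (n + 1) =
        2 * a_seq n + (\<Sum>k = 0..n. real ((n + 1) choose k) * a_seq k) + 3)"
proof
  show "a_seq 0 = 1"
    using p_seq_0 by (simp add: a_seq_def p_seq_def)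
  show "\<forall>n. 3 * a_seq (n + 1) = 2 * a_seq n + (\<Sum>k = 0..n. real ((n + 1) choose k) * a_seq k) + 3"
    using a_seq_recurrence by blast
qed

end
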